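(* Let $\zeta$, $C$, $M$, $X$, $Y$ be as in the context, and for real $s$ let $$\alpha(s)=a_0(s)^2(2h(s)-\kappa(s))+b_0(s)^2(2\overline{h(s)}-\overline{\kappa(s)}).$$ Then the condition $X^o(\lambda=1)=0$ (vanishing of the off-diagonal part of $X$ at $\lambda=1$) is equivalent to $$\int_0^p\alpha(t)\,dt=0,$$ and the condition $Y^d(\lambda=1)=0$ (vanishing of the diagonal part of $Y$ at $\lambda=1$) is equivalent to $$\int_0^p\Im\left(\alpha(t)\int_0^t\overline{\alpha(s)}\,ds\right)dt=\int_0^p\Im\left(a_0(t)\overline{b_0(t)}\kappa(t)\right)dt.$$
   Context: Let $p>0$ and $\mathbb D\subset\mathbb C$ a connected open set containing $\mathbb R$, invariant under $z\mapsto\bar z$ and $z\mapsto z+p$. Let $a_0,b_0:\mathbb D\to\mathbb C$ be holomorphic, $p$-periodic, with $a_0(z)\overline{a_0(\bar z)}-b_0(z)\overline{b_0(\bar z)}=1$, $a_0(0)=1$, $b_0(0)=0$, and $C_0(z)=\begin{pmatrix}a_0(z)&b_0(z)\\ \overline{b_0(\bar z)}&\overline{a_0(\bar z)}\end{pmatrix}$. Write $C_0^{-1}\partial_zC_0=\begin{pmatrix}\nu&\kappa\\ \overline{\kappa(\bar z)}&-\nu\end{pmatrix}$, so $\kappa(z)=\overline{a_0(\bar z)}\partial_zb_0(z)-b_0(z)\partial_z\overline{a_0(\bar z)}$. Let $h$ be a $p$-periodic meromorphic function on $\mathbb D$ without poles on $\mathbb R$ and $$\zeta(z,\lambda)=\begin{pmatrix}\nu(z)&\lambda^{-1}h(z)+\lambda(\kappa(z)-h(z))\\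 \lambda^{-1}(\overline{\kappa(\bar z)}-\overline{h(\bar z)})+\lambda\overline{h(\bar z)}&-\nu(z)\end{pmatrix}dz.$$ Let $C(z,\lambda)$ solve $dC=C\zeta$, $C(0,\lambda)=\operatorname{id}$, let $M(\lambda)=C(p,\lambda)$, $X(\lambda)=-i\lambda(\partial_\lambda M)M^{-1}$, $Y(\lambda)=-\frac12\lambda\partial_\lambda(\lambda(\partial_\lambda M)M^{-1})$. *)

theory Defs
  imports "HOL-Complex_Analysis.Complex_Analysis"
begin

definition refl_fun :: "(complex \<Rightarrow> complex) \<Rightarrow> complex \<Rightarrow> complex" where
  "refl_fun f z = cnj (f (cnj z))"

text \<open>Entries of C0^{-1} dC0 = [[nu, kappa],[kappa^*, -nu]] (using det C0 = 1).\<close>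
definition kappa :: "(complex \<Rightarrow> complex) \<Rightarrow> (complex \<Rightarrow> complex) \<Rightarrow> complex \<Rightarrow> complex" where
  "kappa a0 b0 z = refl_fun a0 z * deriv b0 z - b0 z * deriv (refl_fun a0) z"

definition nu :: "(complex \<Rightarrow> complex) \<Rightarrow> (complex \<Rightarrow> complex) \<Rightarrow> complex \<Rightarrow> complex" where
  "nu a0 b0 z = refl_fun a0 z * deriv a0 z - b0 z * deriv (refl_fun b0) z"

text \<open>The coefficient matrix of the 1-form zeta (coefficient of dz).\<close>
definition zeta :: "(complex \<Rightarrow> complex) \<Rightarrow> (complex \<Rightarrow> complex) \<Rightarrow> (complex \<Rightarrow> complex)
    \<Rightarrow> complex \<Rightarrow> complex \<Rightarrow> complex^2^2" where
  "zeta a0 b0 h z l = (\<chi> i j.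
     if i = 1 \<and> j = 1 then nu a0 b0 z
     else if i = 1 \<and> j = 2 then inverse l * h z + l * (kappa a0 b0 z - h z)
     else if i = 2 \<and> j = 1 then inverse l * (refl_fun (kappa a0 b0) z - refl_fun h z) + l * refl_fun h z
     else - nu a0 b0 z)"

definition mderiv :: "(complex \<Rightarrow> complex^2^2) \<Rightarrow> complex \<Rightarrow> complex^2^2" where
  "mderiv F l = (\<chi> i j. deriv (\<lambda>m. F m $ i $ j) l)"

definition Xmat :: "(complex \<Rightarrow> complex^2^2) \<Rightarrow> complex \<Rightarrow> complex^2^2" where
  "Xmat M l = (\<chi> i j. (- \<i> * l) * (mderiv M l ** matrix_inv (M l)) $ i $ j)"

definition Ymat :: "(complex \<Rightarrow> complex^2^2) \<Rightarrow> complex \<Rightarrow> complex^2^2" where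
  "Ymat M l = (\<chi> i j. (- (1/2) * l) *
      mderiv (\<lambda>m. \<chi> r s. m * (mderiv M m ** matrix_inv (M m)) $ r $ s) l $ i $ j)"

definition alpha :: "(complex \<Rightarrow> complex) \<Rightarrow> (complex \<Rightarrow> complex) \<Rightarrow> (complex \<Rightarrow> complex) \<Rightarrow> real \<Rightarrow> complex" where
  "alpha a0 b0 h s = (a0 (of_real s))\<^sup>2 * (2 * h (of_real s) - kappa a0 b0 (of_real s))
     + (b0 (of_real s))\<^sup>2 * (2 * cnj (h (of_real s)) - cnj (kappa a0 b0 (of_real s)))"

end

theory Submission
  imports Defs
begin

text \<open>
  Write zeta = E + l F + G / l with E, F, G traceless, so that det C = 1 and C^-1 = adj C.
  With the divided difference W(l, m) = (Z(l) - Z(m)) / (l - m) = F - G / (l m), the derivative of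
  C(l) adj C(m) integrates to the exact identity C(t, l) - C(t, m) = (l - m) Delta(t, l, m) C(t, m),
  where Delta(t, l, m) is the integral over [0, t] of C(l) W(l, m) adj C(m). Hence
  (dM/dl) M^-1 = Delta(p, l, l), and a second divided difference shows that its l-derivative is
  the integral of [Delta, P] + (2 / l^3) C G adj C, where P = C W(l, l) adj C is the integrand of
  Delta. At l = 1 the solution is the frame C0 itself, and conjugating W(1, 1) = F - G by C0 puts
  -alpha and its conjugate off the diagonal of P. The two conditions are then read off from the
  entries of X(1) = -i Delta(p, 1, 1) and Y(1) = -(Delta(p, 1, 1) + Delta'(p, 1, 1)) / 2.
\<close>

no_notation fps_nth (infixl \<open>$\<close> 75)

section \<open>Two-by-two matrices\<close>

type_synonym cmat2 = "complex^2^2"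

lemma matrix2_eqI:
  "A $ 1 $ 1 = B $ 1 $ 1 \<Longrightarrow> A $ 1 $ 2 = B $ 1 $ 2 \<Longrightarrow> A $ 2 $ 1 = B $ 2 $ 1 \<Longrightarrow>
    A $ 2 $ 2 = B $ 2 $ 2 \<Longrightarrow> (A :: 'a^2^2) = B"
  by (simp add: vec_eq_iff forall_2)

lemma matrix_matrix_mult_nth_2 [simp]:
  "((A :: 'a::semiring_1^2^'m) ** B) $ i $ j = A $ i $ 1 * B $ 1 $ j + A $ i $ 2 * B $ 2 $ j"
  by (simp add: matrix_matrix_mult_def sum_2)

lemma mat_nth_2 [simp]:
  "(mat c :: 'a::zero^2^2) $ 1 $ 1 = c" "(mat c :: 'a^2^2) $ 2 $ 2 = c"
  "(mat c :: 'a^2^2) $ 1 $ 2 = 0" "(mat c :: 'a^2^2) $ 2 $ 1 = 0"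
  by (simp_all add: mat_def)

lemma matrix_mult_distribs_2:
  fixes A B D :: "'a::ring_1^2^2"
  shows "A ** (B + D) = A ** B + A ** D" "(A + B) ** D = A ** D + B ** D"
    "A ** (B - D) = A ** B - A ** D" "(A - B) ** D = A ** D - B ** D"
    "A ** (- B) = - (A ** B)" "(- A) ** B = - (A ** B)"
  by (rule matrix2_eqI; simp add: algebra_simps)+

lemma matrix_mult3_diff_2:
  fixes A B D A' B' D' :: "'a::comm_ring_1^2^2"
  shows "A ** B ** D - A' ** B' ** D' = (A - A') ** B ** D + A' ** (B - B') ** D + A' ** B' ** (D - D')"
  by (rule matrix2_eqI; simp add: algebra_simps)

definition matrix2 :: "'a \<Rightarrow> 'a \<Rightarrow> 'a \<Rightarrow> 'a \<Rightarrow> 'a^2^2" where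
  "matrix2 a b c d = (\<chi> i j. if i = 1 then (if j = 1 then a else b) else (if j = 1 then c else d))"

lemma matrix2_nth [simp]:
  "matrix2 a b c d $ 1 $ 1 = a" "matrix2 a b c d $ 1 $ 2 = b"
  "matrix2 a b c d $ 2 $ 1 = c" "matrix2 a b c d $ 2 $ 2 = d"
  by (simp_all add: matrix2_def)

lemma trace_2: "trace (A :: 'a::semiring_1^2^2) = A $ 1 $ 1 + A $ 2 $ 2"
  by (simp add: trace_def sum_2)

lemma trace_eq_0_iff_2: "trace (A :: 'a::ring_1^2^2) = 0 \<longleftrightarrow> A $ 2 $ 2 = - A $ 1 $ 1"
  by (auto simp: trace_2 add_eq_0_iff)

lemma norm_nth_nth_le: "norm (A $ i $ j) \<le> norm (A :: 'a::real_normed_vector^'n^'m)"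
  using Finite_Cartesian_Product.norm_nth_le[of "A $ i" j] Finite_Cartesian_Product.norm_nth_le[of A i] by linarith

lemma norm_le_entries_2:
  "norm (A :: 'a::real_normed_vector^2^2) \<le> norm (A$1$1) + norm (A$1$2) + norm (A$2$1) + norm (A$2$2)"
proof -
  have row: "norm (x :: 'b::real_normed_vector^2) \<le> norm (x$1) + norm (x$2)" for x
    using L2_set_le_sum[of UNIV "\<lambda>i. norm (x$i)"] by (simp add: norm_vec_def sum_2)
  show ?thesis using row[of A] row[of "A$1"] row[of "A$2"] by linarith
qed

lemma norm_matrix_mult_le_2: "norm ((A :: cmat2) ** (B :: cmat2)) \<le> norm A * norm B * 8"
proof -
  have entry: "norm ((A ** B) $ i $ j) \<le> 2 * (norm A * norm B)" for i j
  proof -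
    have "norm ((A ** B) $ i $ j) \<le> norm (A$i$1) * norm (B$1$j) + norm (A$i$2) * norm (B$2$j)"
      by (simp add: norm_mult[symmetric] norm_triangle_ineq)
    also have "\<dots> \<le> norm A * norm B + norm A * norm B"
      using norm_nth_nth_le[of A] norm_nth_nth_le[of B] by (intro add_mono mult_mono) auto
    finally show ?thesis by (simp add: mult.commute)
  qed
  show ?thesis
    using norm_le_entries_2[of "A ** B"] entry[of 1 1] entry[of 1 2] entry[of 2 1] entry[of 2 2]
    by linarith
qed

lemma norm_matrix_mult3_le_2: "norm ((A :: cmat2) ** (B :: cmat2) ** (D :: cmat2)) \<le> 64 * (norm A * norm B * norm D)"
proof -
  have "norm (A ** B ** D) \<le> norm (A ** B) * norm D * 8"
    by (rule norm_matrix_mult_le_2)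
  also have "\<dots> \<le> (norm A * norm B * 8) * norm D * 8"
    by (intro mult_right_mono norm_matrix_mult_le_2) auto
  finally show ?thesis by (simp add: algebra_simps)
qed

lemma bounded_bilinear_matrix_mult_2: "bounded_bilinear ((**) :: cmat2 \<Rightarrow> cmat2 \<Rightarrow> cmat2)"
proof
  fix A A' B B' :: cmat2 and r :: real
  show "(A + A') ** B = A ** B + A' ** B" "A ** (B + B') = A ** B + A ** B'"
    "(r *\<^sub>R A) ** B = r *\<^sub>R (A ** B)" "A ** (r *\<^sub>R B) = r *\<^sub>R (A ** B)"
    by (rule matrix2_eqI; simp add: algebra_simps)+
next
  show "\<exists>K. \<forall>(A :: cmat2) (B :: cmat2). norm (A ** B) \<le> norm A * norm B * K"
    using norm_matrix_mult_le_2 by blast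
qed

lemma bounded_linear_nth_nth: "bounded_linear (\<lambda>A :: 'a::real_normed_vector^'n^'m. A $ i $ j)"
  by (rule bounded_linear_intro[where K=1]) (auto simp: norm_nth_nth_le)

definition adjugate2 :: "'a::uminus^2^2 \<Rightarrow> 'a^2^2" where
  "adjugate2 A = (\<chi> i j. if i = 1 then (if j = 1 then A$2$2 else - A$1$2)
                                   else (if j = 1 then - A$2$1 else A$1$1))"

lemma adjugate2_nth [simp]:
  "adjugate2 A $ 1 $ 1 = A$2$2" "adjugate2 A $ 1 $ 2 = - A$1$2"
  "adjugate2 A $ 2 $ 1 = - A$2$1" "adjugate2 A $ 2 $ 2 = A$1$1"
  by (simp_all add: adjugate2_def)

lemma matrix_mult_adjugate2: "(A :: 'a::comm_ring_1^2^2) ** adjugate2 A = mat (det A)"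
  and adjugate2_matrix_mult: "adjugate2 A ** A = mat (det A)"
  by (rule matrix2_eqI; simp add: det_2 algebra_simps)+

lemma adjugate2_matrix_mult_distrib: "adjugate2 ((A :: 'a::comm_ring_1^2^2) ** B) = adjugate2 B ** adjugate2 A"
  by (rule matrix2_eqI; simp add: algebra_simps)

lemma adjugate2_traceless: "trace (A :: 'a::ring_1^2^2) = 0 \<Longrightarrow> adjugate2 A = - A"
  by (rule matrix2_eqI; simp add: trace_eq_0_iff_2)

lemma adjugate2_mat [simp]: "adjugate2 (mat c :: 'a::ring_1^2^2) = mat c"
  by (rule matrix2_eqI; simp)

lemma norm_adjugate2: "norm (adjugate2 A) = norm (A :: 'a::real_normed_vector^2^2)"
  by (simp add: norm_vec_def L2_set_def sum_2 algebra_simps)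

lemma bounded_linear_adjugate2: "bounded_linear (adjugate2 :: 'a::real_normed_vector^2^2 \<Rightarrow> _)"
proof (rule bounded_linear_intro[where K=1])
  fix A B :: "'a^2^2" and r :: real
  show "adjugate2 (A + B) = adjugate2 A + adjugate2 B" "adjugate2 (r *\<^sub>R A) = r *\<^sub>R adjugate2 A"
    by (rule matrix2_eqI; simp)+
  show "norm (adjugate2 A) \<le> norm A * 1"
    by (simp add: norm_adjugate2)
qed

lemma adjugate2_diff: "adjugate2 (A - B :: 'a::ab_group_add^2^2) = adjugate2 A - adjugate2 B"
  by (rule matrix2_eqI; simp)

definition cscale :: "'a::times \<Rightarrow> 'a^'n^'m \<Rightarrow> 'a^'n^'m" where
  "cscale c A = (\<chi> i j. c * A $ i $ j)"

lemma cscale_nth [simp]: "cscale c A $ i $ j = c * A $ i $ j"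
  by (simp add: cscale_def)

lemma norm_cscale: "norm (cscale c A) = norm c * norm (A :: 'a::real_normed_field^'n^'m)"
proof -
  have row: "norm (\<chi> j. c * x $ j) = norm c * norm (x :: 'a^'n)" for x
    by (simp add: norm_vec_def norm_mult L2_set_right_distrib)
  have "norm (cscale c A) = L2_set (\<lambda>i. norm c * norm (A $ i)) UNIV"
    by (simp add: cscale_def norm_vec_def[of "\<chi> i. \<chi> j. c * A $ i $ j"] row)
  then show ?thesis
    by (simp add: norm_vec_def L2_set_right_distrib)
qed

lemma bounded_bilinear_cscale: "bounded_bilinear (cscale :: 'a::real_normed_field \<Rightarrow> 'a^'n^'m \<Rightarrow> _)"
proof
  fix a a' :: 'a and A A' :: "'a^'n^'m" and r :: real
  show "cscale (a + a') A = cscale a A + cscale a' A" "cscale a (A + A') = cscale a A + cscale a A'"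
    "cscale (r *\<^sub>R a) A = r *\<^sub>R cscale a A" "cscale a (r *\<^sub>R A) = r *\<^sub>R cscale a A"
    by (simp_all add: vec_eq_iff distrib_left distrib_right)
next
  show "\<exists>K. \<forall>(a::'a) (A::'a^'n^'m). norm (cscale a A) \<le> norm a * norm A * K"
    by (rule exI[of _ 1]) (simp add: norm_cscale)
qed

lemma cscale_add_right: "cscale c (A + B) = cscale c A + cscale c (B :: 'a::semiring_1^'n^'m)"
  by (simp add: vec_eq_iff distrib_left)

lemma cscale_matrix_mult: "cscale c A ** B = cscale c ((A :: 'a::comm_semiring_1^2^2) ** (B :: 'a^2^2))"
  and matrix_mult_cscale: "A ** cscale c B = cscale c (A ** B)"
  by (rule matrix2_eqI; simp add: algebra_simps)+

lemma adjugate2_cscale: "adjugate2 (cscale c (A :: 'a::comm_ring_1^2^2)) = cscale c (adjugate2 A)"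
  by (rule matrix2_eqI; simp)

lemma trace_cscale: "trace (cscale c A) = c * trace (A :: 'a::comm_semiring_1^2^2)"
  by (simp add: trace_2 algebra_simps)

lemma trace_conjugate_adjugate2: "trace (A ** B ** adjugate2 A) = det A * trace (B :: 'a::comm_ring_1^2^2)"
  by (simp add: trace_2 det_2 algebra_simps)

lemma matrix_inv_unique:
  fixes A B :: "'a::semiring_1^'n^'n"
  assumes "A ** B = mat 1" "B ** A = mat 1"
  shows "matrix_inv A = B"
proof -
  have inv: "A ** matrix_inv A = mat 1 \<and> matrix_inv A ** A = mat 1"
    unfolding matrix_inv_def by (rule someI[of _ B]) (use assms in simp)
  then have "matrix_inv A = matrix_inv A ** (A ** B)"
    using assms by (simp add: matrix_mul_rid)
  also have "\<dots> = B"
    using inv by (simp add: matrix_mul_assoc matrix_mul_lid)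
  finally show ?thesis .
qed

section \<open>Matrix-valued calculus and uniform limits\<close>

lemma has_vector_derivative_vecI:
  fixes f :: "real \<Rightarrow> 'a::real_normed_vector^'n"
  assumes "\<And>i. ((\<lambda>x. f x $ i) has_vector_derivative f' $ i) F"
  shows "(f has_vector_derivative f') F"
proof -
  let ?x = "Lim F (\<lambda>x. x)"
  have "((\<lambda>y. (f y - f ?x - (y - ?x) *\<^sub>R f') /\<^sub>R norm (y - ?x)) \<longlongrightarrow> 0) F"
  proof (rule vec_tendstoI)
    fix i
    show "((\<lambda>y. ((f y - f ?x - (y - ?x) *\<^sub>R f') /\<^sub>R norm (y - ?x)) $ i) \<longlongrightarrow> 0 $ i) F"
      using assms[of i] unfolding has_vector_derivative_def has_derivative_def by simp
  qed
  then show ?thesis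
    unfolding has_vector_derivative_def has_derivative_def by (simp add: bounded_linear_scaleR_left)
qed

lemma has_vector_derivative_matrixI:
  fixes f :: "real \<Rightarrow> 'a::real_normed_vector^'n^'m"
  assumes "\<And>i j. ((\<lambda>x. f x $ i $ j) has_vector_derivative f' $ i $ j) F"
  shows "(f has_vector_derivative f') F"
  by (intro has_vector_derivative_vecI assms)

lemma has_vector_derivative_nth_nth:
  "(f has_vector_derivative f') F \<Longrightarrow>
    ((\<lambda>x. f x $ i $ j) has_vector_derivative f' $ i $ j) F"
  by (rule bounded_linear.has_vector_derivative[OF bounded_linear_nth_nth])

lemma has_vector_derivative_matrix_mult_2:
  fixes f g :: "real \<Rightarrow> cmat2"
  assumes "(f has_vector_derivative f') (at x within S)" "(g has_vector_derivative g') (at x within S)"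
  shows "((\<lambda>x. f x ** g x) has_vector_derivative (f x ** g' + f' ** g x)) (at x within S)"
  by (rule bounded_bilinear.has_vector_derivative[OF bounded_bilinear_matrix_mult_2 assms])

lemma continuous_on_matrix_mult_2 [continuous_intros]:
  fixes f g :: "'a::topological_space \<Rightarrow> cmat2"
  shows "continuous_on S f \<Longrightarrow> continuous_on S g \<Longrightarrow> continuous_on S (\<lambda>x. f x ** g x)"
  by (rule bounded_bilinear.continuous_on[OF bounded_bilinear_matrix_mult_2])

lemma continuous_on_cscale [continuous_intros]:
  fixes f :: "'a::topological_space \<Rightarrow> 'b::real_normed_field^'n^'m"
  shows "continuous_on S c \<Longrightarrow> continuous_on S f \<Longrightarrow> continuous_on S (\<lambda>x. cscale (c x) (f x))"
  by (rule bounded_bilinear.continuous_on[OF bounded_bilinear_cscale])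

lemma continuous_on_adjugate2 [continuous_intros]:
  fixes f :: "'a::topological_space \<Rightarrow> 'b::real_normed_vector^2^2"
  shows "continuous_on S f \<Longrightarrow> continuous_on S (\<lambda>x. adjugate2 (f x))"
  by (rule bounded_linear.continuous_on[OF bounded_linear_adjugate2])

lemma continuous_on_nth_nth [continuous_intros]:
  fixes f :: "'a::topological_space \<Rightarrow> 'b::real_normed_vector^'n^'m"
  shows "continuous_on S f \<Longrightarrow> continuous_on S (\<lambda>x. f x $ i $ j)"
  by (rule bounded_linear.continuous_on[OF bounded_linear_nth_nth])

lemma continuous_on_matrix2 [continuous_intros]:
  fixes a b c d :: "'a::topological_space \<Rightarrow> 'b::topological_space"
  assumes "continuous_on S a" "continuous_on S b" "continuous_on S c" "continuous_on S d"
  shows "continuous_on S (\<lambda>x. matrix2 (a x) (b x) (c x) (d x))"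
proof -
  have if_cont: "continuous_on S (\<lambda>x. if P then f x else g x)"
    if "continuous_on S f" "continuous_on S g" for P and f g :: "'a \<Rightarrow> 'b"
    using that by (cases P) auto
  show ?thesis
    unfolding matrix2_def by (intro continuous_on_vec_lambda if_cont assms)
qed

lemma bounded_continuous_image_Icc:
  "continuous_on {a..b} (f :: real \<Rightarrow> 'a::real_normed_vector) \<Longrightarrow> bounded (f ` {a..b})"
  by (rule compact_imp_bounded[OF compact_continuous_image[OF _ compact_Icc]])

lemma uniform_limit_tendsto_const: "(f \<longlongrightarrow> c) F \<Longrightarrow> uniform_limit S (\<lambda>l s. f l) (\<lambda>s. c) F"
  unfolding uniform_limit_iff using tendstoD by fastforce

lemma uniform_limit_at_Lipschitz:
  fixes f :: "'a::metric_space \<Rightarrow> 'b \<Rightarrow> 'c::metric_space"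
  assumes "\<forall>\<^sub>F l in at m. \<forall>s\<in>S. dist (f l s) (g s) \<le> L * dist l m"
  shows "uniform_limit S f g (at m)"
proof (rule uniform_limitI)
  fix e :: real assume "e > 0"
  have "((\<lambda>l. L * dist l m) \<longlongrightarrow> L * dist m m) (at m)"
    by (intro tendsto_intros)
  then have "\<forall>\<^sub>F l in at m. L * dist l m < e"
    using \<open>e > 0\<close> by (auto dest: order_tendstoD)
  with assms show "\<forall>\<^sub>F l in at m. \<forall>s\<in>S. dist (f l s) (g s) < e"
    by eventually_elim force
qed

lemma uniform_limit_eventually_norm_le:
  fixes f :: "'i \<Rightarrow> 'a \<Rightarrow> 'b::real_normed_vector"
  assumes "uniform_limit S f g F" "\<And>s. s \<in> S \<Longrightarrow> norm (g s) \<le> B"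
  shows "\<forall>\<^sub>F l in F. \<forall>s\<in>S. norm (f l s) \<le> B + 1"
  using uniform_limitD[OF assms(1) zero_less_one]
proof (rule eventually_mono, intro ballI)
  fix l s assume "\<forall>s\<in>S. dist (f l s) (g s) < 1" "s \<in> S"
  then show "norm (f l s) \<le> B + 1"
    using assms(2)[of s] norm_triangle_ineq2[of "f l s" "g s"] by (force simp: dist_norm)
qed

lemma uniform_limit_indefinite_integral:
  fixes f :: "'i \<Rightarrow> real \<Rightarrow> 'a::banach"
  assumes lim: "uniform_limit {a..b} f g F"
    and cont: "\<forall>\<^sub>F l in F. continuous_on {a..b} (f l)" "continuous_on {a..b} g"
  shows "uniform_limit {a..b} (\<lambda>l s. integral {a..s} (f l)) (\<lambda>s. integral {a..s} g) F"
proof (rule uniform_limitI)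
  fix e :: real assume "e > 0"
  define e' where "e' = e / (b - a + 1)"
  show "\<forall>\<^sub>F l in F. \<forall>s\<in>{a..b}. dist (integral {a..s} (f l)) (integral {a..s} g) < e"
  proof (cases "a \<le> b")
    case True
    then have "e' > 0"
      using \<open>e > 0\<close> by (simp add: e'_def)
    from uniform_limitD[OF lim \<open>e' > 0\<close>] cont(1) show ?thesis
    proof eventually_elim
      case (elim l)
      show ?case
      proof
        fix s assume s: "s \<in> {a..b}"
        have sub: "{a..s} \<subseteq> {a..b}" using s by auto
        have "dist (integral {a..s} (f l)) (integral {a..s} g) = norm (integral {a..s} (\<lambda>u. f l u - g u))"
          using sub elim(2) cont(2)
          by (simp add: dist_norm integral_diff integrable_continuous_interval continuous_on_subset)
        also have "\<dots> \<le> e' * (s - a)"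
        proof (rule integral_bound)
          show "continuous_on {a..s} (\<lambda>u. f l u - g u)"
            using sub elim(2) cont(2) by (intro continuous_intros) (auto intro: continuous_on_subset)
          show "norm (f l u - g u) \<le> e'" if "u \<in> {a..s}" for u
            using elim(1) sub that by (force simp: dist_norm)
        qed (use s in auto)
        also have "\<dots> < e' * (b - a + 1)"
          using s \<open>e > 0\<close> by (intro mult_strict_left_mono) (auto simp: e'_def)
        also have "\<dots> = e"
          using s by (simp add: e'_def)
        finally show "dist (integral {a..s} (f l)) (integral {a..s} g) < e" .
      qed
    qed
  qed simp
qed

lemma has_field_derivative_nth_nth_divided_difference:
  fixes f q :: "complex \<Rightarrow> cmat2"
  assumes "\<forall>\<^sub>F l in at m. f l - f m = cscale (l - m) (q l)" "(q \<longlongrightarrow> d) (at m)"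
  shows "((\<lambda>l. f l $ i $ j) has_field_derivative d $ i $ j) (at m)"
  unfolding has_field_derivative_iff
proof (rule Lim_transform_eventually)
  show "((\<lambda>l. q l $ i $ j) \<longlongrightarrow> d $ i $ j) (at m)"
    by (intro tendsto_vec_nth assms(2))
  show "\<forall>\<^sub>F l in at m. q l $ i $ j = (f l $ i $ j - f m $ i $ j) / (l - m)"
  proof -
    have "\<forall>\<^sub>F l in at m. l \<noteq> m"
      by (simp add: eventually_at_filter)
    with assms(1) show ?thesis
      by eventually_elim (simp add: vec_eq_iff)
  qed
qed

lemma integral_nth_nth:
  "f integrable_on S \<Longrightarrow> integral S f $ i $ j = integral S (\<lambda>x. (f x :: 'a::real_normed_vector^'n^'m) $ i $ j)"
  using integral_linear[OF _ bounded_linear_nth_nth, of f S i j] by (simp add: o_def)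

lemma integral_cscale:
  "f integrable_on S \<Longrightarrow> integral S (\<lambda>x. cscale c (f x)) = cscale c (integral S f :: 'a::real_normed_field^'n^'m)"
  using integral_linear[OF _ bounded_bilinear.bounded_linear_right[OF bounded_bilinear_cscale], of f S c]
  by (simp add: o_def)

lemma trace_integral:
  assumes "f integrable_on S"
  shows "trace (integral S f :: 'a::{real_normed_vector,semiring_1}^2^2) = integral S (\<lambda>x. trace (f x))"
proof -
  have "(\<lambda>x. f x $ i $ i) integrable_on S" for i
    using integrable_linear[OF assms bounded_linear_nth_nth] by (simp add: o_def)
  then show ?thesis
    using assms by (simp add: trace_2 integral_nth_nth integral_add)
qed

section \<open>Linear ODEs with a traceless Laurent pencil\<close>

lemma det_const_traceless_ode:
  fixes X Y :: "real \<Rightarrow> cmat2"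
  assumes deriv: "\<And>t. (X has_vector_derivative X t ** Y t) (at t)" and traceless: "\<And>t. trace (Y t) = 0"
  shows "det (X t) = det (X s)"
proof -
  have "((\<lambda>u. det (X u)) has_vector_derivative 0) (at u within UNIV)" for u
  proof -
    note d = has_vector_derivative_nth_nth[OF deriv[of u]]
    have "((\<lambda>u. X u $ 1 $ 1 * X u $ 2 $ 2 - X u $ 1 $ 2 * X u $ 2 $ 1) has_vector_derivative
       X u $ 1 $ 1 * (X u ** Y u) $ 2 $ 2 + (X u ** Y u) $ 1 $ 1 * X u $ 2 $ 2
       - (X u $ 1 $ 2 * (X u ** Y u) $ 2 $ 1 + (X u ** Y u) $ 1 $ 2 * X u $ 2 $ 1)) (at u)"
      by (intro has_vector_derivative_diff has_vector_derivative_mult d)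
    moreover have "Y u $ 2 $ 2 = - Y u $ 1 $ 1"
      using traceless[of u] by (simp add: trace_eq_0_iff_2)
    ultimately show ?thesis
      by (simp add: det_2 algebra_simps)
  qed
  then obtain c where "\<And>u. det (X u) = c"
    using has_vector_derivative_zero_constant[of UNIV "\<lambda>u. det (X u)"] by auto
  then show ?thesis by simp
qed

locale traceless_pencil_ode =
  fixes E F G :: "real \<Rightarrow> cmat2" and C :: "real \<Rightarrow> complex \<Rightarrow> cmat2"
  assumes continuous_E: "continuous_on UNIV E"
    and continuous_F: "continuous_on UNIV F"
    and continuous_G: "continuous_on UNIV G"
    and trace_E: "trace (E t) = 0" and trace_F: "trace (F t) = 0" and trace_G: "trace (G t) = 0"
    and C_0: "l \<noteq> 0 \<Longrightarrow> C 0 l = mat 1"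
    and C_ode: "l \<noteq> 0 \<Longrightarrow>
      ((\<lambda>s. C s l) has_vector_derivative C t l ** (E t + cscale l (F t) + cscale (inverse l) (G t))) (at t)"
begin

definition Z :: "real \<Rightarrow> complex \<Rightarrow> cmat2" where
  "Z t l = E t + cscale l (F t) + cscale (inverse l) (G t)"

definition W :: "real \<Rightarrow> complex \<Rightarrow> complex \<Rightarrow> cmat2" where
  "W t l m = F t - cscale (inverse (l * m)) (G t)"

lemma Z_diff: "l \<noteq> 0 \<Longrightarrow> m \<noteq> 0 \<Longrightarrow> Z t l - Z t m = cscale (l - m) (W t l m)"
  by (rule matrix2_eqI; simp add: Z_def W_def field_simps)

lemma trace_Z: "trace (Z t l) = 0"
  by (simp add: Z_def trace_add trace_cscale trace_E trace_F trace_G)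

lemma trace_W: "trace (W t l m) = 0"
  by (simp add: W_def trace_sub trace_cscale trace_F trace_G)

lemma continuous_on_EFG: "continuous_on S E" "continuous_on S F" "continuous_on S G"
  using continuous_E continuous_F continuous_G continuous_on_subset by blast+

lemma continuous_on_W: "continuous_on S (\<lambda>s. W s l m)"
  unfolding W_def by (intro continuous_intros continuous_on_EFG)

lemma C_has_vector_derivative: "l \<noteq> 0 \<Longrightarrow> ((\<lambda>s. C s l) has_vector_derivative C t l ** Z t l) (at t)"
  unfolding Z_def by (rule C_ode)

lemma continuous_on_C: "l \<noteq> 0 \<Longrightarrow> continuous_on S (\<lambda>s. C s l)"
  by (rule continuous_on_vector_derivative)
    (auto intro: has_vector_derivative_at_within C_has_vector_derivative)

lemma det_C: "l \<noteq> 0 \<Longrightarrow> det (C t l) = 1"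
  using det_const_traceless_ode[OF C_has_vector_derivative trace_Z, of l t 0] C_0[of l]
  by (simp add: det_2)

lemma C_mult_adjugate2: "l \<noteq> 0 \<Longrightarrow> C t l ** adjugate2 (C t l) = mat 1"
  and adjugate2_mult_C: "l \<noteq> 0 \<Longrightarrow> adjugate2 (C t l) ** C t l = mat 1"
  using det_C by (simp_all add: matrix_mult_adjugate2 adjugate2_matrix_mult)

lemma adjugate2_C_has_vector_derivative:
  assumes "l \<noteq> 0"
  shows "((\<lambda>s. adjugate2 (C s l)) has_vector_derivative - (Z t l ** adjugate2 (C t l))) (at t)"
proof -
  have "((\<lambda>s. adjugate2 (C s l)) has_vector_derivative adjugate2 (C t l ** Z t l)) (at t)"
    by (rule bounded_linear.has_vector_derivative[OF bounded_linear_adjugate2 C_has_vector_derivative[OF assms]])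
  then show ?thesis
    by (simp add: adjugate2_matrix_mult_distrib adjugate2_traceless[OF trace_Z] matrix_mult_distribs_2)
qed

lemma C_unique:
  assumes l: "l \<noteq> 0"
    and deriv: "\<And>t. (X has_vector_derivative X t ** Z t l) (at t)" and X_0: "X 0 = mat 1"
  shows "C t l = X t"
proof -
  define R where "R s = C s l ** adjugate2 (X s)" for s
  have "(R has_vector_derivative 0) (at s within UNIV)" for s
  proof -
    have "((\<lambda>s. adjugate2 (X s)) has_vector_derivative adjugate2 (X s ** Z s l)) (at s)"
      by (rule bounded_linear.has_vector_derivative[OF bounded_linear_adjugate2 deriv])
    then have "(R has_vector_derivative C s l ** adjugate2 (X s ** Z s l) + C s l ** Z s l ** adjugate2 (X s)) (at s)"
      unfolding R_def by (intro has_vector_derivative_matrix_mult_2 C_has_vector_derivative l)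
    moreover have "C s l ** adjugate2 (X s ** Z s l) + C s l ** Z s l ** adjugate2 (X s) = 0"
      by (simp add: adjugate2_matrix_mult_distrib adjugate2_traceless[OF trace_Z] matrix_mult_distribs_2
          matrix_mul_assoc)
    ultimately show ?thesis by simp
  qed
  then obtain c where "\<And>s. R s = c"
    using has_vector_derivative_zero_constant[of UNIV R] by auto
  then have "R t = R 0" by simp
  also have "R 0 = mat 1"
    using C_0[OF l] X_0 by (simp add: R_def matrix_mul_lid)
  finally have "C t l ** adjugate2 (X t) = mat 1"
    by (simp add: R_def)
  moreover have "adjugate2 (X t) ** X t = mat 1"
    using det_const_traceless_ode[OF deriv trace_Z, of t 0] X_0 by (simp add: adjugate2_matrix_mult det_2)
  ultimately show ?thesis
    by (metis matrix_mul_assoc matrix_mul_lid matrix_mul_rid)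
qed

definition Delta_integrand :: "real \<Rightarrow> complex \<Rightarrow> complex \<Rightarrow> cmat2" where
  "Delta_integrand s l m = C s l ** W s l m ** adjugate2 (C s m)"

definition Delta :: "real \<Rightarrow> complex \<Rightarrow> complex \<Rightarrow> cmat2" where
  "Delta t l m = integral {0..t} (\<lambda>s. Delta_integrand s l m)"

lemma continuous_on_Delta_integrand:
  "l \<noteq> 0 \<Longrightarrow> m \<noteq> 0 \<Longrightarrow> continuous_on S (\<lambda>s. Delta_integrand s l m)"
  unfolding Delta_integrand_def by (intro continuous_intros continuous_on_C continuous_on_W)

lemma integrable_Delta_integrand:
  "l \<noteq> 0 \<Longrightarrow> m \<noteq> 0 \<Longrightarrow> (\<lambda>s. Delta_integrand s l m) integrable_on {a..b}"
  by (intro integrable_continuous_interval continuous_on_Delta_integrand)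

lemma continuous_on_Delta: "l \<noteq> 0 \<Longrightarrow> m \<noteq> 0 \<Longrightarrow> continuous_on {0..T} (\<lambda>t. Delta t l m)"
  unfolding Delta_def by (intro indefinite_integral_continuous_1 integrable_Delta_integrand)

text \<open>C(l) adj C(m) has derivative C(l) (Z(l) - Z(m)) adj C(m), so integrating it expresses the
  divided difference of C in l exactly, without remainder term.\<close>
lemma C_diff:
  assumes l: "l \<noteq> 0" and m: "m \<noteq> 0" and t: "0 \<le> t"
  shows "C t l - C t m = cscale (l - m) (Delta t l m ** C t m)"
proof -
  define R where "R s = C s l ** adjugate2 (C s m)" for s
  have "(R has_vector_derivative cscale (l - m) (Delta_integrand s l m)) (at s within {0..t})" for s
  proof -
    have "(R has_vector_derivative C s l ** - (Z s m ** adjugate2 (C s m)) + C s l ** Z s l ** adjugate2 (C s m)) (at s)"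
      unfolding R_def
      by (intro has_vector_derivative_matrix_mult_2 C_has_vector_derivative adjugate2_C_has_vector_derivative l m)
    moreover have "C s l ** - (Z s m ** adjugate2 (C s m)) + C s l ** Z s l ** adjugate2 (C s m)
        = C s l ** (Z s l - Z s m) ** adjugate2 (C s m)"
      by (simp only: matrix_mult_distribs_2 matrix_mul_assoc) simp
    moreover have "C s l ** (Z s l - Z s m) ** adjugate2 (C s m) = cscale (l - m) (Delta_integrand s l m)"
      by (simp only: Z_diff[OF l m] cscale_matrix_mult matrix_mult_cscale Delta_integrand_def)
    ultimately show ?thesis
      by (simp add: has_vector_derivative_at_within)
  qed
  then have "((\<lambda>s. cscale (l - m) (Delta_integrand s l m)) has_integral R t - R 0) {0..t}"
    by (rule fundamental_theorem_of_calculus[OF t])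
  then have "R t - R 0 = cscale (l - m) (Delta t l m)"
    by (simp only: Delta_def integral_cscale[OF integrable_Delta_integrand[OF l m], symmetric] integral_unique)
  then have "R t = mat 1 + cscale (l - m) (Delta t l m)"
    using C_0[OF l] C_0[OF m] by (simp add: R_def algebra_simps)
  moreover have "C t l = R t ** C t m"
    by (simp add: R_def matrix_mul_assoc[symmetric] adjugate2_mult_C[OF m])
  ultimately show ?thesis
    by (simp add: matrix_mult_distribs_2 cscale_matrix_mult)
qed

lemma eventually_at_nonzero: "(m :: complex) \<noteq> 0 \<Longrightarrow> \<forall>\<^sub>F l in at m. l \<noteq> 0"
  by (rule tendsto_imp_eventually_ne[OF tendsto_ident_at])

lemma uniform_limit_W:
  assumes "m \<noteq> 0" "(\<phi> \<longlongrightarrow> m) (at m)" "(\<psi> \<longlongrightarrow> m) (at m)"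
  shows "uniform_limit {0..T} (\<lambda>l s. W s (\<phi> l) (\<psi> l)) (\<lambda>s. W s m m) (at m)"
proof -
  have "((\<lambda>l. inverse (\<phi> l * \<psi> l)) \<longlongrightarrow> inverse (m * m)) (at m)"
    using assms by (intro tendsto_intros) auto
  then have "uniform_limit {0..T} (\<lambda>l s. cscale (inverse (\<phi> l * \<psi> l)) (G s))
      (\<lambda>s. cscale (inverse (m * m)) (G s)) (at m)"
    by (intro bounded_bilinear.bounded_uniform_limit[OF bounded_bilinear_cscale] uniform_limit_tendsto_const
        uniform_limit_const bounded_continuous_image_Icc continuous_on_EFG continuous_on_const)
  then show ?thesis
    unfolding W_def by (intro uniform_limit_intros)
qed

lemma W_eventually_bounded:
  assumes m: "m \<noteq> 0"
  shows "\<exists>B. \<forall>\<^sub>F l in at m. \<forall>s\<in>{0..T}. norm (W s l m) \<le> B"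
proof -
  obtain B where "\<And>s. s \<in> {0..T} \<Longrightarrow> norm (W s m m) \<le> B"
    using continuous_on_compact_bound[OF compact_Icc continuous_on_W] by metis
  then show ?thesis
    using uniform_limit_eventually_norm_le[OF uniform_limit_W[OF m tendsto_ident_at tendsto_const]] by blast
qed

lemma norm_C_diff_le:
  assumes l: "l \<noteq> 0" and m: "m \<noteq> 0" and t: "t \<in> {0..T}"
    and K: "\<And>s. s \<in> {0..T} \<Longrightarrow> norm (C s l) \<le> K"
    and BW: "\<And>s. s \<in> {0..T} \<Longrightarrow> norm (W s l m) \<le> BW"
    and BC: "\<And>s. s \<in> {0..T} \<Longrightarrow> norm (C s m) \<le> BC"
  shows "norm (C t l - C t m) \<le> cmod (l - m) * (512 * K * BW * BC * BC * T)"
proof -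
  have nonneg: "0 \<le> K" "0 \<le> BW" "0 \<le> BC"
    using K[of 0] BW[of 0] BC[of 0] t by (auto intro: order_trans[OF norm_ge_zero])
  have "norm (Delta t l m) \<le> 64 * (K * BW * BC) * (t - 0)"
    unfolding Delta_def
  proof (rule integral_bound)
    fix s assume "s \<in> {0..t}"
    then have s: "s \<in> {0..T}" using t by auto
    have "norm (Delta_integrand s l m) \<le> 64 * (norm (C s l) * norm (W s l m) * norm (C s m))"
      unfolding Delta_integrand_def norm_adjugate2[of "C s m", symmetric] by (rule norm_matrix_mult3_le_2)
    also have "\<dots> \<le> 64 * (K * BW * BC)"
      using K[OF s] BW[OF s] BC[OF s] nonneg by (intro mult_left_mono mult_mono) auto
    finally show "norm (Delta_integrand s l m) \<le> 64 * (K * BW * BC)" .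
  qed (use t continuous_on_Delta_integrand[OF l m] in auto)
  also have "\<dots> \<le> 64 * (K * BW * BC) * T"
    using t nonneg by (intro mult_left_mono) auto
  finally have Delta_le: "norm (Delta t l m) \<le> 64 * (K * BW * BC) * T" .
  have "norm (C t l - C t m) = cmod (l - m) * norm (Delta t l m ** C t m)"
    using C_diff[OF l m] t by (simp add: norm_cscale)
  also have "\<dots> \<le> cmod (l - m) * (norm (Delta t l m) * norm (C t m) * 8)"
    by (intro mult_left_mono norm_matrix_mult_le_2) auto
  also have "\<dots> \<le> cmod (l - m) * ((64 * (K * BW * BC) * T) * BC * 8)"
    using Delta_le BC[OF t] nonneg t by (intro mult_left_mono mult_right_mono mult_mono) auto
  finally show ?thesis
    by (simp add: algebra_simps)
qed

text \<open>A bootstrap: with N the maximum of the norm of C(l) over [0, T], the variation identity gives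
  N \<le> max |C(m)| + c |l - m| N, hence N \<le> 2 max |C(m)| once c |l - m| \<le> 1/2.\<close>
lemma C_eventually_bounded:
  assumes m: "m \<noteq> 0" and T: "0 \<le> T"
  shows "\<exists>K. \<forall>\<^sub>F l in at m. \<forall>s\<in>{0..T}. norm (C s l) \<le> K"
proof -
  obtain BC where BC: "\<And>s. s \<in> {0..T} \<Longrightarrow> norm (C s m) \<le> BC"
    using continuous_on_compact_bound[OF compact_Icc continuous_on_C[OF m]] by metis
  obtain BW where BW: "\<forall>\<^sub>F l in at m. \<forall>s\<in>{0..T}. norm (W s l m) \<le> BW"
    using W_eventually_bounded[OF m] by blast
  define c where "c = 512 * BW * BC * BC * T"
  have "((\<lambda>l. cmod (l - m) * c) \<longlongrightarrow> cmod (m - m) * c) (at m)"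
    by (intro tendsto_intros)
  then have small: "\<forall>\<^sub>F l in at m. cmod (l - m) * c < 1 / 2"
    by (rule order_tendstoD) simp
  have "\<forall>\<^sub>F l in at m. \<forall>s\<in>{0..T}. norm (C s l) \<le> 2 * BC"
    using BW small eventually_at_nonzero[OF m]
  proof eventually_elim
    case (elim l)
    have "\<exists>s0\<in>{0..T}. \<forall>s\<in>{0..T}. norm (C s l) \<le> norm (C s0 l)"
      using T by (intro continuous_attains_sup continuous_on_norm continuous_on_C elim(3)) auto
    then obtain s0 where s0: "s0 \<in> {0..T}" "\<And>s. s \<in> {0..T} \<Longrightarrow> norm (C s l) \<le> norm (C s0 l)"
      by blast
    define N where "N = norm (C s0 l)"
    have "N \<le> norm (C s0 m) + norm (C s0 l - C s0 m)"
      unfolding N_def by (rule norm_triangle_sub)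
    also have "norm (C s0 l - C s0 m) \<le> cmod (l - m) * (512 * N * BW * BC * BC * T)"
      by (rule norm_C_diff_le[OF elim(3) m s0(1)]) (use s0 elim(1) BC in \<open>auto simp: N_def\<close>)
    also have "\<dots> = (cmod (l - m) * c) * N"
      by (simp add: c_def algebra_simps)
    also have "\<dots> \<le> 1 / 2 * N"
      using elim(2) by (intro mult_right_mono) (auto simp: N_def)
    finally have "N \<le> 2 * BC"
      using BC[OF s0(1)] by linarith
    then show ?case
      using s0(2) by (force simp: N_def)
  qed
  then show ?thesis by blast
qed

lemma uniform_limit_C:
  assumes m: "m \<noteq> 0" and T: "0 \<le> T"
  shows "uniform_limit {0..T} (\<lambda>l s. C s l) (\<lambda>s. C s m) (at m)"
proof -
  obtain K where K: "\<forall>\<^sub>F l in at m. \<forall>s\<in>{0..T}. norm (C s l) \<le> K"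
    using C_eventually_bounded[OF m T] by blast
  obtain BW where BW: "\<forall>\<^sub>F l in at m. \<forall>s\<in>{0..T}. norm (W s l m) \<le> BW"
    using W_eventually_bounded[OF m] by blast
  obtain BC where BC: "\<And>s. s \<in> {0..T} \<Longrightarrow> norm (C s m) \<le> BC"
    using continuous_on_compact_bound[OF compact_Icc continuous_on_C[OF m]] by metis
  have "\<forall>\<^sub>F l in at m. \<forall>s\<in>{0..T}. dist (C s l) (C s m) \<le> (512 * K * BW * BC * BC * T) * dist l m"
    using K BW eventually_at_nonzero[OF m]
  proof eventually_elim
    case (elim l)
    show ?case
    proof
      fix s assume "s \<in> {0..T}"
      then have "norm (C s l - C s m) \<le> cmod (l - m) * (512 * K * BW * BC * BC * T)"
        by (rule norm_C_diff_le[OF elim(3) m]) (use elim BC in auto)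
      then show "dist (C s l) (C s m) \<le> (512 * K * BW * BC * BC * T) * dist l m"
        by (simp add: dist_norm mult.commute)
    qed
  qed
  then show ?thesis
    by (rule uniform_limit_at_Lipschitz)
qed

lemma uniform_limit_Delta:
  assumes m: "m \<noteq> 0" and T: "0 \<le> T"
  shows "uniform_limit {0..T} (\<lambda>l t. Delta t l m) (\<lambda>t. Delta t m m) (at m)"
  unfolding Delta_def
proof (rule uniform_limit_indefinite_integral)
  show "uniform_limit {0..T} (\<lambda>l s. Delta_integrand s l m) (\<lambda>s. Delta_integrand s m m) (at m)"
    unfolding Delta_integrand_def
    by (intro bounded_bilinear.bounded_uniform_limit[OF bounded_bilinear_matrix_mult_2]
        uniform_limit_C[OF m T] uniform_limit_W[OF m tendsto_ident_at tendsto_const] uniform_limit_const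
        bounded_continuous_image_Icc continuous_intros continuous_on_C continuous_on_W m)
  show "\<forall>\<^sub>F l in at m. continuous_on {0..T} (\<lambda>s. Delta_integrand s l m)"
    using eventually_at_nonzero[OF m] by eventually_elim (intro continuous_on_Delta_integrand m)
  show "continuous_on {0..T} (\<lambda>s. Delta_integrand s m m)"
    by (intro continuous_on_Delta_integrand m)
qed

lemma C_has_field_derivative:
  assumes m: "m \<noteq> 0" and t: "0 \<le> t"
  shows "((\<lambda>l. C t l $ i $ j) has_field_derivative (Delta t m m ** C t m) $ i $ j) (at m)"
proof (rule has_field_derivative_nth_nth_divided_difference)
  show "\<forall>\<^sub>F l in at m. C t l - C t m = cscale (l - m) (Delta t l m ** C t m)"
    using eventually_at_nonzero[OF m] by eventually_elim (intro C_diff m t)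
  have "((\<lambda>l. Delta t l m) \<longlongrightarrow> Delta t m m) (at m)"
    by (rule tendsto_uniform_limitI[OF uniform_limit_Delta[OF m t]]) (use t in simp)
  then show "((\<lambda>l. Delta t l m ** C t m) \<longlongrightarrow> Delta t m m ** C t m) (at m)"
    by (intro bounded_bilinear.tendsto[OF bounded_bilinear_matrix_mult_2] tendsto_const)
qed

text \<open>Telescoping C(l) W(l, l) adj C(l) - C(m) W(m, m) adj C(m) one factor at a time.\<close>
definition Delta_integrand_dq :: "real \<Rightarrow> complex \<Rightarrow> complex \<Rightarrow> cmat2" where
  "Delta_integrand_dq s l m = (Delta s l m ** C s m) ** W s l l ** adjugate2 (C s l)
     + C s m ** cscale ((l + m) * inverse (l * l * m * m)) (G s) ** adjugate2 (C s l)
     + C s m ** W s m m ** adjugate2 (Delta s l m ** C s m)"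

lemma continuous_on_Delta_integrand_dq:
  "l \<noteq> 0 \<Longrightarrow> m \<noteq> 0 \<Longrightarrow> continuous_on {0..T} (\<lambda>s. Delta_integrand_dq s l m)"
  unfolding Delta_integrand_dq_def
  by (intro continuous_intros continuous_on_C continuous_on_Delta continuous_on_W continuous_on_EFG)

lemma Delta_integrand_diag_diff:
  assumes l: "l \<noteq> 0" and m: "m \<noteq> 0" and s: "0 \<le> s"
  shows "Delta_integrand s l l - Delta_integrand s m m = cscale (l - m) (Delta_integrand_dq s l m)"
proof -
  have C: "C s l - C s m = cscale (l - m) (Delta s l m ** C s m)"
    by (rule C_diff[OF l m s])
  have W: "W s l l - W s m m = cscale (l - m) (cscale ((l + m) * inverse (l * l * m * m)) (G s))"
    by (rule matrix2_eqI; simp add: W_def field_simps l m; simp add: algebra_simps power2_eq_square)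
  have A: "adjugate2 (C s l) - adjugate2 (C s m) = cscale (l - m) (adjugate2 (Delta s l m ** C s m))"
    by (simp only: adjugate2_diff[symmetric] C adjugate2_cscale)
  show ?thesis
    unfolding Delta_integrand_def Delta_integrand_dq_def matrix_mult3_diff_2[of "C s l"] C W A
    by (simp only: cscale_matrix_mult matrix_mult_cscale cscale_add_right)
qed

lemma uniform_limit_Delta_integrand_dq:
  assumes m: "m \<noteq> 0" and T: "0 \<le> T"
  shows "uniform_limit {0..T} (\<lambda>l s. Delta_integrand_dq s l m) (\<lambda>s. Delta_integrand_dq s m m) (at m)"
proof -
  have DC: "uniform_limit {0..T} (\<lambda>l s. Delta s l m ** C s m) (\<lambda>s. Delta s m m ** C s m) (at m)"
    by (intro bounded_bilinear.bounded_uniform_limit[OF bounded_bilinear_matrix_mult_2] uniform_limit_Delta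
        uniform_limit_const bounded_continuous_image_Icc continuous_on_C continuous_on_Delta m T)
  have adjC: "uniform_limit {0..T} (\<lambda>l s. adjugate2 (C s l)) (\<lambda>s. adjugate2 (C s m)) (at m)"
    by (rule bounded_linear.uniform_limit[OF bounded_linear_adjugate2 uniform_limit_C[OF m T]])
  have "((\<lambda>l. (l + m) * inverse (l * l * m * m)) \<longlongrightarrow> (m + m) * inverse (m * m * m * m)) (at m)"
    using m by (intro tendsto_intros) auto
  then have G: "uniform_limit {0..T} (\<lambda>l s. cscale ((l + m) * inverse (l * l * m * m)) (G s))
      (\<lambda>s. cscale ((m + m) * inverse (m * m * m * m)) (G s)) (at m)"
    by (intro bounded_bilinear.bounded_uniform_limit[OF bounded_bilinear_cscale] uniform_limit_tendsto_const
        uniform_limit_const bounded_continuous_image_Icc continuous_on_EFG continuous_on_const)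
  have W: "uniform_limit {0..T} (\<lambda>l s. W s l l) (\<lambda>s. W s m m) (at m)"
    by (rule uniform_limit_W[OF m tendsto_ident_at tendsto_ident_at])
  have adjDC: "uniform_limit {0..T} (\<lambda>l s. adjugate2 (Delta s l m ** C s m)) (\<lambda>s. adjugate2 (Delta s m m ** C s m)) (at m)"
    by (rule bounded_linear.uniform_limit[OF bounded_linear_adjugate2 DC])
  note mult = bounded_bilinear.bounded_uniform_limit[OF bounded_bilinear_matrix_mult_2]
  have bounded: "bounded (f ` {0..T})" if "continuous_on {0..T} f" for f :: "real \<Rightarrow> cmat2"
    using that by (rule bounded_continuous_image_Icc)
  have "uniform_limit {0..T} (\<lambda>l s. (Delta s l m ** C s m) ** W s l l ** adjugate2 (C s l))
      (\<lambda>s. (Delta s m m ** C s m) ** W s m m ** adjugate2 (C s m)) (at m)"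
    by (rule mult[OF mult[OF DC W] adjC]; rule bounded;
        intro continuous_intros continuous_on_C continuous_on_Delta continuous_on_W m)
  moreover have "uniform_limit {0..T} (\<lambda>l s. C s m ** cscale ((l + m) * inverse (l * l * m * m)) (G s) ** adjugate2 (C s l))
      (\<lambda>s. C s m ** cscale ((m + m) * inverse (m * m * m * m)) (G s) ** adjugate2 (C s m)) (at m)"
    by (rule mult[OF mult[OF uniform_limit_const G] adjC]; rule bounded;
        intro continuous_intros continuous_on_C continuous_on_EFG m)
  moreover have "uniform_limit {0..T} (\<lambda>l s. C s m ** W s m m ** adjugate2 (Delta s l m ** C s m))
      (\<lambda>s. C s m ** W s m m ** adjugate2 (Delta s m m ** C s m)) (at m)"
    by (rule mult[OF uniform_limit_const adjDC]; rule bounded;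
        intro continuous_intros continuous_on_C continuous_on_Delta continuous_on_W m)
  ultimately show ?thesis
    unfolding Delta_integrand_dq_def by (intro uniform_limit_add)
qed

lemma Delta_diag_has_field_derivative:
  assumes m: "m \<noteq> 0" and t: "0 \<le> t"
  shows "((\<lambda>l. Delta t l l $ i $ j) has_field_derivative integral {0..t} (\<lambda>s. Delta_integrand_dq s m m) $ i $ j) (at m)"
proof (rule has_field_derivative_nth_nth_divided_difference)
  show "\<forall>\<^sub>F l in at m. Delta t l l - Delta t m m = cscale (l - m) (integral {0..t} (\<lambda>s. Delta_integrand_dq s l m))"
    using eventually_at_nonzero[OF m]
  proof eventually_elim
    case (elim l)
    have "Delta t l l - Delta t m m = integral {0..t} (\<lambda>s. Delta_integrand s l l - Delta_integrand s m m)"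
      unfolding Delta_def using elim m by (simp add: integral_diff integrable_Delta_integrand)
    also have "\<dots> = integral {0..t} (\<lambda>s. cscale (l - m) (Delta_integrand_dq s l m))"
      by (intro integral_cong Delta_integrand_diag_diff elim m) auto
    also have "\<dots> = cscale (l - m) (integral {0..t} (\<lambda>s. Delta_integrand_dq s l m))"
      by (intro integral_cscale integrable_continuous_interval continuous_on_Delta_integrand_dq elim m)
    finally show ?case .
  qed
  have "uniform_limit {0..t} (\<lambda>l u. integral {0..u} (\<lambda>s. Delta_integrand_dq s l m))
      (\<lambda>u. integral {0..u} (\<lambda>s. Delta_integrand_dq s m m)) (at m)"
  proof (rule uniform_limit_indefinite_integral)
    show "\<forall>\<^sub>F l in at m. continuous_on {0..t} (\<lambda>s. Delta_integrand_dq s l m)"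
      using eventually_at_nonzero[OF m] by eventually_elim (intro continuous_on_Delta_integrand_dq m)
  qed (intro uniform_limit_Delta_integrand_dq continuous_on_Delta_integrand_dq m t)+
  then show "((\<lambda>l. integral {0..t} (\<lambda>s. Delta_integrand_dq s l m)) \<longlongrightarrow>
      integral {0..t} (\<lambda>s. Delta_integrand_dq s m m)) (at m)"
    by (rule tendsto_uniform_limitI) (use t in simp)
qed

lemma log_derivative_C:
  assumes m: "m \<noteq> 0" and t: "0 \<le> t"
  shows "mderiv (\<lambda>l. C t l) m ** matrix_inv (C t m) = Delta t m m"
proof -
  have "mderiv (\<lambda>l. C t l) m = Delta t m m ** C t m"
    unfolding mderiv_def by (simp add: vec_eq_iff DERIV_imp_deriv[OF C_has_field_derivative[OF m t]])
  moreover have "matrix_inv (C t m) = adjugate2 (C t m)"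
    by (rule matrix_inv_unique[OF C_mult_adjugate2[OF m] adjugate2_mult_C[OF m]])
  ultimately show ?thesis
    by (simp add: matrix_mul_assoc[symmetric] C_mult_adjugate2[OF m])
qed

lemma Xmat_C: "m \<noteq> 0 \<Longrightarrow> 0 \<le> t \<Longrightarrow> Xmat (\<lambda>l. C t l) m = cscale (- \<i> * m) (Delta t m m)"
  by (simp add: Xmat_def cscale_def log_derivative_C)

lemma Ymat_C:
  assumes m: "m \<noteq> 0" and t: "0 \<le> t"
  shows "Ymat (\<lambda>l. C t l) m
    = cscale (- (1/2) * m) (Delta t m m + cscale m (integral {0..t} (\<lambda>s. Delta_integrand_dq s m m)))"
proof -
  let ?D = "integral {0..t} (\<lambda>s. Delta_integrand_dq s m m)"
  have "deriv (\<lambda>\<mu>. \<mu> * (mderiv (\<lambda>l. C t l) \<mu> ** matrix_inv (C t \<mu>)) $ i $ j) m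
      = Delta t m m $ i $ j + m * ?D $ i $ j" for i j
  proof (rule DERIV_imp_deriv)
    have "((\<lambda>\<mu>. \<mu> * Delta t \<mu> \<mu> $ i $ j) has_field_derivative Delta t m m $ i $ j + m * ?D $ i $ j) (at m)"
      using DERIV_mult[OF DERIV_ident Delta_diag_has_field_derivative[OF m t]] by (simp add: mult.commute)
    then show "((\<lambda>\<mu>. \<mu> * (mderiv (\<lambda>l. C t l) \<mu> ** matrix_inv (C t \<mu>)) $ i $ j) has_field_derivative
        Delta t m m $ i $ j + m * ?D $ i $ j) (at m)"
      by (rule has_field_derivative_transform_within_open[of _ _ _ "- {0}"])
        (use m t in \<open>auto simp: log_derivative_C\<close>)
  qed
  then show ?thesis
    by (simp add: Ymat_def mderiv_def cscale_def vec_eq_iff algebra_simps)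
qed

lemma trace_Delta_integrand_diag: "l \<noteq> 0 \<Longrightarrow> trace (Delta_integrand s l l) = 0"
  by (simp add: Delta_integrand_def trace_conjugate_adjugate2 det_C trace_W)

lemma trace_Delta_diag: "l \<noteq> 0 \<Longrightarrow> trace (Delta t l l) = 0"
  by (simp add: Delta_def trace_integral integrable_Delta_integrand trace_Delta_integrand_diag)

lemma Delta_integrand_dq_diag:
  assumes m: "m \<noteq> 0"
  shows "Delta_integrand_dq s m m = Delta s m m ** Delta_integrand s m m - Delta_integrand s m m ** Delta s m m
    + cscale (2 / m ^ 3) (C s m ** G s ** adjugate2 (C s m))"
proof -
  have "adjugate2 (Delta s m m ** C s m) = - (adjugate2 (C s m) ** Delta s m m)"
    by (simp add: adjugate2_matrix_mult_distrib adjugate2_traceless[OF trace_Delta_diag[OF m]]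
        matrix_mult_distribs_2)
  moreover have "(m + m) * inverse (m * m * m * m) = 2 / m ^ 3"
    using m by (simp add: field_simps power3_eq_cube)
  ultimately show ?thesis
    by (simp add: Delta_integrand_def Delta_integrand_dq_def matrix_mul_assoc matrix_mult_distribs_2
        cscale_matrix_mult matrix_mult_cscale)
qed

lemma trace_Delta_integrand_dq_diag: "m \<noteq> 0 \<Longrightarrow> trace (Delta_integrand_dq s m m) = 0"
  by (simp add: Delta_integrand_dq_diag trace_add trace_sub trace_mul_sym[of "Delta s m m"] trace_cscale
      trace_conjugate_adjugate2 det_C trace_G)

lemma trace_Ymat_C: "m \<noteq> 0 \<Longrightarrow> 0 \<le> t \<Longrightarrow> trace (Ymat (\<lambda>l. C t l) m) = 0"
  by (simp add: Ymat_C trace_cscale trace_add trace_Delta_diag trace_integral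
      integrable_continuous_interval continuous_on_Delta_integrand_dq trace_Delta_integrand_dq_diag)

end

section \<open>The frame on the real axis\<close>

lemma refl_fun_of_real: "refl_fun f (of_real t) = cnj (f (of_real t))"
  by (simp add: refl_fun_def)

lemma deriv_refl_fun_of_real:
  assumes "f field_differentiable (at (of_real t))"
  shows "deriv (refl_fun f) (of_real t) = cnj (deriv f (of_real t))"
proof -
  have "(f has_field_derivative deriv f (cnj (of_real t))) (at (cnj (of_real t)))"
    using assms by (simp add: DERIV_deriv_iff_field_differentiable)
  from has_field_derivative_cnj_cnj[OF this] show ?thesis
    by (intro DERIV_imp_deriv) (simp add: refl_fun_def[abs_def] o_def)
qed

locale su11_frame =
  fixes D :: "complex set" and a0 b0 h :: "complex \<Rightarrow> complex" and C :: "complex \<Rightarrow> complex \<Rightarrow> cmat2"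
  assumes open_D: "open D" and reals_subset_D: "\<real> \<subseteq> D"
    and holomorphic_a0: "a0 holomorphic_on D" and holomorphic_b0: "b0 holomorphic_on D"
    and det_C0: "\<forall>z\<in>D. a0 z * refl_fun a0 z - b0 z * refl_fun b0 z = 1"
    and a0_0: "a0 0 = 1" and b0_0: "b0 0 = 0"
    and analytic_h: "h analytic_on \<real>"
    and C_0: "\<forall>l. l \<noteq> 0 \<longrightarrow> C 0 l = mat 1"
    and C_ode: "\<forall>l. l \<noteq> 0 \<longrightarrow> (\<forall>t::real.
      ((\<lambda>s. C (of_real s) l) has_vector_derivative C (of_real t) l ** zeta a0 b0 h (of_real t) l) (at t))"
begin

definition a :: "real \<Rightarrow> complex" where "a t = a0 (of_real t)"
definition b :: "real \<Rightarrow> complex" where "b t = b0 (of_real t)"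
definition a' :: "real \<Rightarrow> complex" where "a' t = deriv a0 (of_real t)"
definition b' :: "real \<Rightarrow> complex" where "b' t = deriv b0 (of_real t)"
definition \<eta> :: "real \<Rightarrow> complex" where "\<eta> t = h (of_real t)"
definition \<kappa> :: "real \<Rightarrow> complex" where "\<kappa> t = kappa a0 b0 (of_real t)"
definition \<nu> :: "real \<Rightarrow> complex" where "\<nu> t = nu a0 b0 (of_real t)"

lemma of_real_in_D: "complex_of_real t \<in> D"
  using reals_subset_D by auto

lemma a0_has_field_derivative: "(a0 has_field_derivative a' t) (at (of_real t))"
  unfolding a'_def by (rule holomorphic_derivI[OF holomorphic_a0 open_D of_real_in_D])

lemma b0_has_field_derivative: "(b0 has_field_derivative b' t) (at (of_real t))"
  unfolding b'_def by (rule holomorphic_derivI[OF holomorphic_b0 open_D of_real_in_D])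

lemma a_has_vector_derivative: "(a has_vector_derivative a' t) (at t)"
  unfolding a_def by (rule has_vector_derivative_real_field[OF a0_has_field_derivative])

lemma b_has_vector_derivative: "(b has_vector_derivative b' t) (at t)"
  unfolding b_def by (rule has_vector_derivative_real_field[OF b0_has_field_derivative])

lemma continuous_on_of_real_comp:
  assumes "continuous_on D f"
  shows "continuous_on S (\<lambda>t. f (complex_of_real t))"
  by (rule continuous_on_compose2[OF assms continuous_on_of_real[OF continuous_on_id]])
    (use of_real_in_D in auto)

lemma continuous_on_a: "continuous_on S a" and continuous_on_b: "continuous_on S b"
  and continuous_on_a': "continuous_on S a'" and continuous_on_b': "continuous_on S b'"
  unfolding a_def b_def a'_def b'_def
  by (rule continuous_on_of_real_comp holomorphic_on_imp_continuous_on holomorphic_a0 holomorphic_b0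
      holomorphic_deriv open_D)+

lemma continuous_on_\<eta>: "continuous_on S \<eta>"
proof -
  have "isCont h (of_real t)" for t
    using analytic_on_imp_differentiable_at[OF analytic_h] by (simp add: field_differentiable_imp_continuous_at)
  then show ?thesis
    unfolding \<eta>_def by (intro continuous_at_imp_continuous_on ballI isCont_o2[OF continuous_of_real[OF continuous_ident]])
qed

lemma \<kappa>_eq: "\<kappa> t = cnj (a t) * b' t - b t * cnj (a' t)"
  using deriv_refl_fun_of_real[of a0 t] a0_has_field_derivative[of t]
  by (auto simp: \<kappa>_def kappa_def a_def b_def a'_def b'_def refl_fun_of_real field_differentiable_def)

lemma \<nu>_eq: "\<nu> t = cnj (a t) * a' t - b t * cnj (b' t)"
  using deriv_refl_fun_of_real[of b0 t] b0_has_field_derivative[of t]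
  by (auto simp: \<nu>_def nu_def a_def b_def a'_def b'_def refl_fun_of_real field_differentiable_def)

lemma continuous_on_\<kappa>: "continuous_on S \<kappa>" and continuous_on_\<nu>: "continuous_on S \<nu>"
  unfolding \<kappa>_eq[abs_def] \<nu>_eq[abs_def]
  by (intro continuous_intros continuous_on_a continuous_on_b continuous_on_a' continuous_on_b')+

lemma det_frame: "a t * cnj (a t) - b t * cnj (b t) = 1"
  using bspec[OF det_C0 of_real_in_D[of t]] by (simp add: a_def b_def refl_fun_of_real)

lemma det_frame_derivative: "a' t * cnj (a t) + a t * cnj (a' t) - (b' t * cnj (b t) + b t * cnj (b' t)) = 0"
proof -
  have "((\<lambda>s. a s * cnj (a s) - b s * cnj (b s)) has_vector_derivative
      a t * cnj (a' t) + a' t * cnj (a t) - (b t * cnj (b' t) + b' t * cnj (b t))) (at t)"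
    by (intro has_vector_derivative_diff has_vector_derivative_mult has_vector_derivative_cnj
        a_has_vector_derivative b_has_vector_derivative)
  then have "((\<lambda>s. 1) has_vector_derivative
      a t * cnj (a' t) + a' t * cnj (a t) - (b t * cnj (b' t) + b' t * cnj (b t))) (at t)"
    by (simp add: det_frame)
  from vector_derivative_unique_at[OF this has_vector_derivative_const] show ?thesis
    by (simp add: algebra_simps)
qed

definition E :: "real \<Rightarrow> cmat2" where "E t = matrix2 (\<nu> t) 0 0 (- \<nu> t)"
definition F :: "real \<Rightarrow> cmat2" where "F t = matrix2 0 (\<kappa> t - \<eta> t) (cnj (\<eta> t)) 0"
definition G :: "real \<Rightarrow> cmat2" where "G t = matrix2 0 (\<eta> t) (cnj (\<kappa> t) - cnj (\<eta> t)) 0"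

lemma zeta_of_real: "zeta a0 b0 h (of_real t) l = E t + cscale l (F t) + cscale (inverse l) (G t)"
  by (rule matrix2_eqI) (simp_all add: zeta_def E_def F_def G_def refl_fun_of_real \<nu>_def \<kappa>_def \<eta>_def)

sublocale pencil: traceless_pencil_ode E F G "\<lambda>s l. C (of_real s) l"
proof
  show "continuous_on UNIV E" "continuous_on UNIV F" "continuous_on UNIV G"
    unfolding E_def F_def G_def by (intro continuous_intros continuous_on_\<nu> continuous_on_\<kappa> continuous_on_\<eta>)+
  show "trace (E t) = 0" "trace (F t) = 0" "trace (G t) = 0" for t
    by (simp_all add: trace_2 E_def F_def G_def)
  show "C (of_real 0) l = mat 1" if "l \<noteq> 0" for l
    using C_0 that by simp
  show "((\<lambda>s. C (of_real s) l) has_vector_derivative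
      C (of_real t) l ** (E t + cscale l (F t) + cscale (inverse l) (G t))) (at t)" if "l \<noteq> 0" for l t
    using C_ode that by (simp add: zeta_of_real)
qed

definition frame :: "real \<Rightarrow> cmat2" where "frame t = matrix2 (a t) (b t) (cnj (b t)) (cnj (a t))"

lemma frame_has_vector_derivative: "(frame has_vector_derivative frame t ** pencil.Z t 1) (at t)"
proof (rule has_vector_derivative_matrixI)
  have Z: "pencil.Z t 1 = matrix2 (\<nu> t) (\<kappa> t) (cnj (\<kappa> t)) (- \<nu> t)"
    by (rule matrix2_eqI) (simp_all add: pencil.Z_def E_def F_def G_def)
  let ?d = "a t * cnj (a t) - b t * cnj (b t)"
  let ?d' = "a' t * cnj (a t) + a t * cnj (a' t) - (b' t * cnj (b t) + b t * cnj (b' t))"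
  have "(frame t ** pencil.Z t 1) $ 1 $ 1 = a' t * ?d" "(frame t ** pencil.Z t 1) $ 1 $ 2 = b' t * ?d - b t * ?d'"
    "(frame t ** pencil.Z t 1) $ 2 $ 1 = cnj (b' t) * ?d" "(frame t ** pencil.Z t 1) $ 2 $ 2 = cnj (a' t) * ?d - cnj (a t) * ?d'"
    by (simp_all add: Z frame_def \<nu>_eq \<kappa>_eq algebra_simps)
  then have entries: "(frame t ** pencil.Z t 1) $ 1 $ 1 = a' t" "(frame t ** pencil.Z t 1) $ 1 $ 2 = b' t"
    "(frame t ** pencil.Z t 1) $ 2 $ 1 = cnj (b' t)" "(frame t ** pencil.Z t 1) $ 2 $ 2 = cnj (a' t)"
    by (simp_all only: det_frame det_frame_derivative) simp_all
  fix i j :: 2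
  have "i = 1 \<or> i = 2" "j = 1 \<or> j = 2"
    by (rule exhaust_2)+
  then show "((\<lambda>x. frame x $ i $ j) has_vector_derivative (frame t ** pencil.Z t 1) $ i $ j) (at t)"
    by (elim disjE; simp only: entries;
        simp add: frame_def a_has_vector_derivative b_has_vector_derivative has_vector_derivative_cnj)
qed

lemma C_1: "C (of_real t) 1 = frame t"
proof -
  have "frame 0 = mat 1"
    by (rule matrix2_eqI) (simp_all add: frame_def a_def b_def a0_0 b0_0)
  then show ?thesis
    using pencil.C_unique[of 1 frame t] frame_has_vector_derivative by simp
qed

lemma alpha_eq: "alpha a0 b0 h s = (a s)\<^sup>2 * (2 * \<eta> s - \<kappa> s) + (b s)\<^sup>2 * (2 * cnj (\<eta> s) - cnj (\<kappa> s))"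
  by (simp add: alpha_def a_def b_def \<eta>_def \<kappa>_def)

lemma continuous_on_alpha: "continuous_on S (alpha a0 b0 h)"
  unfolding alpha_eq[abs_def] by (intro continuous_intros continuous_on_a continuous_on_b continuous_on_\<eta> continuous_on_\<kappa>)

lemma Delta_integrand_1_1:
  "pencil.Delta_integrand s 1 1 $ 1 $ 2 = - alpha a0 b0 h s"
  "pencil.Delta_integrand s 1 1 $ 2 $ 1 = cnj (alpha a0 b0 h s)"
  "pencil.Delta_integrand s 1 1 $ 1 $ 1 + 2 * (frame s ** G s ** adjugate2 (frame s)) $ 1 $ 1
    = cnj (a s * cnj (b s) * \<kappa> s) - a s * cnj (b s) * \<kappa> s"
  by (simp_all add: pencil.Delta_integrand_def pencil.W_def C_1 alpha_eq frame_def F_def G_def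
      power2_eq_square algebra_simps)

lemma integrable_Delta_integrand_1_1: "(\<lambda>s. pencil.Delta_integrand s 1 1 $ i $ j) integrable_on {0..t}"
  by (intro integrable_continuous_interval continuous_intros pencil.continuous_on_Delta_integrand) simp_all

lemma Delta_1_1_nth: "pencil.Delta t 1 1 $ i $ j = integral {0..t} (\<lambda>s. pencil.Delta_integrand s 1 1 $ i $ j)"
  unfolding pencil.Delta_def by (intro integral_nth_nth pencil.integrable_Delta_integrand) simp_all

definition \<beta> :: "real \<Rightarrow> complex" where "\<beta> t = integral {0..t} (\<lambda>s. cnj (alpha a0 b0 h s))"

lemma continuous_on_\<beta>: "continuous_on {0..p} \<beta>"
  unfolding \<beta>_def
  by (intro indefinite_integral_continuous_1 integrable_continuous_interval continuous_intros continuous_on_alpha)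

lemma Delta_1_1_offdiagonal: "pencil.Delta t 1 1 $ 1 $ 2 = - cnj (\<beta> t)" "pencil.Delta t 1 1 $ 2 $ 1 = \<beta> t"
  by (simp_all add: \<beta>_def Delta_1_1_nth Delta_integrand_1_1 integral_cnj)

lemma Xmat_offdiagonal_eq_0_iff:
  assumes p: "0 \<le> p"
  shows "(Xmat (\<lambda>l. C (of_real p) l) 1 $ 1 $ 2 = 0 \<and> Xmat (\<lambda>l. C (of_real p) l) 1 $ 2 $ 1 = 0)
    \<longleftrightarrow> integral {0..p} (alpha a0 b0 h) = 0"
proof -
  have "Xmat (\<lambda>l. C (of_real p) l) 1 = cscale (- \<i>) (pencil.Delta p 1 1)"
    using pencil.Xmat_C[of 1 p] p by simp
  moreover have "cnj (\<beta> p) = integral {0..p} (alpha a0 b0 h)"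
    by (simp add: \<beta>_def integral_cnj)
  ultimately show ?thesis
    by (auto simp: Delta_1_1_offdiagonal)
qed

lemma diagonal_integrand_1_1:
  "pencil.Delta_integrand t 1 1 $ 1 $ 1 + pencil.Delta_integrand_dq t 1 1 $ 1 $ 1
    = 2 * \<i> * of_real (Im (alpha a0 b0 h t * \<beta> t) - Im (a t * cnj (b t) * \<kappa> t))"
proof -
  have "pencil.Delta_integrand t 1 1 $ 1 $ 1 + pencil.Delta_integrand_dq t 1 1 $ 1 $ 1
      = (cnj (a t * cnj (b t) * \<kappa> t) - a t * cnj (b t) * \<kappa> t)
        + (alpha a0 b0 h t * \<beta> t - cnj (alpha a0 b0 h t * \<beta> t))"
    using Delta_integrand_1_1[of t]
    by (simp add: pencil.Delta_integrand_dq_diag Delta_1_1_offdiagonal C_1 algebra_simps)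
  also have "\<dots> = 2 * \<i> * of_real (Im (alpha a0 b0 h t * \<beta> t) - Im (a t * cnj (b t) * \<kappa> t))"
    by (simp add: complex_eq_iff algebra_simps)
  finally show ?thesis .
qed

lemma Ymat_1_1:
  assumes p: "0 \<le> p"
  shows "Ymat (\<lambda>l. C (of_real p) l) 1 $ 1 $ 1
    = - \<i> * of_real (integral {0..p} (\<lambda>t. Im (alpha a0 b0 h t * \<beta> t) - Im (a t * cnj (b t) * \<kappa> t)))"
proof -
  have int_dq: "(\<lambda>s. pencil.Delta_integrand_dq s 1 1 $ 1 $ 1) integrable_on {0..p}"
    by (intro integrable_continuous_interval continuous_intros pencil.continuous_on_Delta_integrand_dq) simp_all
  have int: "(\<lambda>t. Im (alpha a0 b0 h t * \<beta> t) - Im (a t * cnj (b t) * \<kappa> t)) integrable_on {0..p}"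
    by (intro integrable_continuous_interval continuous_intros continuous_on_alpha continuous_on_\<beta>
        continuous_on_a continuous_on_b continuous_on_\<kappa>)
  have "Ymat (\<lambda>l. C (of_real p) l) 1 $ 1 $ 1
      = - (1/2) * integral {0..p} (\<lambda>t. pencil.Delta_integrand t 1 1 $ 1 $ 1 + pencil.Delta_integrand_dq t 1 1 $ 1 $ 1)"
    using pencil.Ymat_C[of 1 p] p
    by (simp add: Delta_1_1_nth integral_add[OF integrable_Delta_integrand_1_1 int_dq] integral_nth_nth
        integrable_continuous_interval pencil.continuous_on_Delta_integrand_dq)
  then show ?thesis
    unfolding diagonal_integrand_1_1 using integral_unique[OF has_integral_of_real[OF integrable_integral[OF int]]]
    by simp
qed

lemma Ymat_diagonal_eq_0_iff:
  assumes p: "0 \<le> p"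
  shows "(Ymat (\<lambda>l. C (of_real p) l) 1 $ 1 $ 1 = 0 \<and> Ymat (\<lambda>l. C (of_real p) l) 1 $ 2 $ 2 = 0)
    \<longleftrightarrow> integral {0..p} (\<lambda>t. Im (alpha a0 b0 h t * integral {0..t} (\<lambda>s. cnj (alpha a0 b0 h s))))
      = integral {0..p} (\<lambda>t. Im (a0 (of_real t) * cnj (b0 (of_real t)) * kappa a0 b0 (of_real t)))"
proof -
  have int: "(\<lambda>t. Im (alpha a0 b0 h t * \<beta> t)) integrable_on {0..p}"
    "(\<lambda>t. Im (a t * cnj (b t) * \<kappa> t)) integrable_on {0..p}"
    by (intro integrable_continuous_interval continuous_intros continuous_on_alpha continuous_on_\<beta>
        continuous_on_a continuous_on_b continuous_on_\<kappa>)+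
  have "Ymat (\<lambda>l. C (of_real p) l) 1 $ 2 $ 2 = - Ymat (\<lambda>l. C (of_real p) l) 1 $ 1 $ 1"
    using pencil.trace_Ymat_C[of 1 p] p by (simp add: trace_eq_0_iff_2)
  then have "(Ymat (\<lambda>l. C (of_real p) l) 1 $ 1 $ 1 = 0 \<and> Ymat (\<lambda>l. C (of_real p) l) 1 $ 2 $ 2 = 0)
      \<longleftrightarrow> integral {0..p} (\<lambda>t. Im (alpha a0 b0 h t * \<beta> t) - Im (a t * cnj (b t) * \<kappa> t)) = 0"
    by (simp add: Ymat_1_1[OF p])
  also have "\<dots> \<longleftrightarrow> integral {0..p} (\<lambda>t. Im (alpha a0 b0 h t * \<beta> t))
      = integral {0..p} (\<lambda>t. Im (a t * cnj (b t) * \<kappa> t))"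
    by (simp only: integral_diff[OF int] right_minus_eq)
  finally show ?thesis
    by (simp only: \<beta>_def a_def b_def \<kappa>_def)
qed

end

theorem proposition2p4:
  fixes p :: real and D :: "complex set"
    and a0 b0 h :: "complex \<Rightarrow> complex"
    and C :: "complex \<Rightarrow> complex \<Rightarrow> complex^2^2"
  assumes "p > 0"
    and "open D" and "connected D" and "\<real> \<subseteq> D"
    and "cnj ` D = D" and "(\<lambda>z. z + of_real p) ` D = D"
    and "a0 holomorphic_on D" and "b0 holomorphic_on D"
    and "\<forall>z\<in>D. a0 (z + of_real p) = a0 z" and "\<forall>z\<in>D. b0 (z + of_real p) = b0 z"
    and "\<forall>z\<in>D. a0 z * refl_fun a0 z - b0 z * refl_fun b0 z = 1"
    and "a0 0 = 1" and "b0 0 = 0"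
    and "h meromorphic_on D" and "h analytic_on \<real>"
    and "\<forall>z\<in>D. h (z + of_real p) = h z"
    and "\<forall>l. l \<noteq> 0 \<longrightarrow> C 0 l = mat 1"
    and "\<forall>l. l \<noteq> 0 \<longrightarrow> (\<forall>t::real.
           ((\<lambda>s. C (of_real s) l) has_vector_derivative
              (C (of_real t) l ** zeta a0 b0 h (of_real t) l)) (at t))"
  shows "((Xmat (\<lambda>l. C (of_real p) l) 1 $ 1 $ 2 = 0 \<and> Xmat (\<lambda>l. C (of_real p) l) 1 $ 2 $ 1 = 0)
            \<longleftrightarrow> integral {0..p} (alpha a0 b0 h) = 0)
       \<and> ((Ymat (\<lambda>l. C (of_real p) l) 1 $ 1 $ 1 = 0 \<and> Ymat (\<lambda>l. C (of_real p) l) 1 $ 2 $ 2 = 0)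
            \<longleftrightarrow> integral {0..p} (\<lambda>t. Im (alpha a0 b0 h t * integral {0..t} (\<lambda>s. cnj (alpha a0 b0 h s))))
                = integral {0..p} (\<lambda>t. Im (a0 (of_real t) * cnj (b0 (of_real t)) * kappa a0 b0 (of_real t))))"
proof -
  \<comment> \<open>Connectedness and symmetry of D, periodicity of a0, b0, h and meromorphy of h are not
    needed: only the values on the real axis enter, and the identities hold on every [0, p].\<close>
  interpret su11_frame D a0 b0 h C
    by (rule su11_frame.intro) (use assms in auto)
  show ?thesis
    using Xmat_offdiagonal_eq_0_iff Ymat_diagonal_eq_0_iff \<open>p > 0\<close> by simp
qed

end
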